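(* If $n\ge3$ and $L$ is a left ideal or a suffix-closed language with $n$ quotients, then $\sigma(L)\le n^{n-1}+n-1$.
   Context: A left ideal is a nonempty $L\subseteq\Sigma^*$ with $L=\Sigma^*L$; $L$ is suffix-closed if $w\in L$ implies every suffix of $w$ is in $L$. The quotients of $L$ are $w^{-1}L=\{x: wx\in L\}$. $\sigma(L)$ is the cardinality of the syntactic semigroup $\Sigma^+/\approx_L$, where $x\approx_L y$ iff $uxv\in L\Leftrightarrow uyv\in L$ for all $u,v$ (equivalently, the size of the transition semigroup of the minimal DFA of $L$). *)

theory Defs
  imports Main
begin

definition lquot :: "'a list \<Rightarrow> 'a list set \<Rightarrow> 'a list set" where
  "lquot w L = {x. w @ x \<in> L}"

definition quotients :: "'a list set \<Rightarrow> 'a list set set" where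
  "quotients L = {lquot w L | w. True}"

definition left_ideal :: "'a list set \<Rightarrow> bool" where
  "left_ideal L \<longleftrightarrow> L \<noteq> {} \<and> L = {u @ v | u v. v \<in> L}"

definition suffix_closed :: "'a list set \<Rightarrow> bool" where
  "suffix_closed L \<longleftrightarrow> (\<forall>u v. u @ v \<in> L \<longrightarrow> v \<in> L)"

definition synt_cong :: "'a list set \<Rightarrow> ('a list \<times> 'a list) set" where
  "synt_cong L = {(x, y). x \<noteq> [] \<and> y \<noteq> [] \<and>
                    (\<forall>u v. (u @ x @ v \<in> L) \<longleftrightarrow> (u @ y @ v \<in> L))}"

definition synt_semigroup_size :: "'a list set \<Rightarrow> nat" where
  "synt_semigroup_size L = card ({x. x \<noteq> []} // synt_cong L)"

end

theory Submission
  imports Defs "HOL-Library.FuncSet"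
begin

text \<open>A nonempty word \<open>x\<close> acts on the quotients by \<open>q \<mapsto> x\<^sup>-\<^sup>1q\<close>, and words acting alike are
  syntactically congruent, so \<open>\<sigma>(L)\<close> is at most the number of these transformations. For a left
  ideal, \<open>L \<subseteq> w\<^sup>-\<^sup>1L\<close> for all \<open>w\<close> and the action preserves inclusion, so the transformations are
  order-preserving self-maps of the \<open>n\<close> quotients ordered by inclusion, with least element \<open>L\<close>.
  A finite poset with least element has at most \<open>n\<^sup>n\<^sup>-\<^sup>1 + n - 1\<close> such maps: if the elements above
  the bottom form an antichain, a map either fixes the bottom or is constant; otherwise a comparable
  pair \<open>a < b\<close> must go to an ordered pair, and grouping the maps by the image \<open>p\<close> of the bottom,
  whose up-set has \<open>u\<^sub>p\<close> elements, bounds twice their number by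
  \<open>\<Sum>\<^sub>p (u\<^sub>p + 1) u\<^sub>p\<^sup>n\<^sup>-\<^sup>2 \<le> \<Sum>\<^sub>j\<^sub>=\<^sub>1\<^sup>n (j + 1) j\<^sup>n\<^sup>-\<^sup>2 \<le> 2(n\<^sup>n\<^sup>-\<^sup>1 + n - 1)\<close>.
  A suffix-closed language other than \<open>\<Sigma>\<^sup>*\<close> is the complement of a left ideal, and complementation
  preserves the number of quotients and the syntactic congruence.\<close>

lemma binomial_three_terms_le:
  fixes a n :: nat
  shows "a^n + n * a^(n-1) + (n choose 2) * a^(n-2) \<le> (a+1)^n"
proof (cases "n < 2")
  case True
  then have "n = 0 \<or> n = 1" by auto
  then show ?thesis by auto
next
  case False
  have "a^n + n * a^(n-1) + (n choose 2) * a^(n-2) = (\<Sum>k\<in>{0,1,2}. (n choose k) * a^(n-k))"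
    by simp
  also have "\<dots> \<le> (\<Sum>k\<le>n. (n choose k) * a^(n-k))"
    using False by (intro sum_mono2) auto
  also have "\<dots> = (a+1)^n"
    using binomial_ring[of 1 a n] by (simp add: add.commute)
  finally show ?thesis .
qed

lemma nine_mult_power_self_le:
  fixes k :: nat
  assumes "2 \<le> k"
  shows "9 * k^k \<le> 4 * (k+1)^k"
proof -
  obtain m where m: "k - 2 = m" "k - 1 = m + 1" "k = m + 2" using assms by (intro that) auto
  have binom: "k^k + k * k^(m+1) + (k choose 2) * k^m \<le> (k+1)^k"
    using binomial_three_terms_le[of k k] m by simp
  have "k^k = k^(m+2)" by (simp only: m(3)[symmetric])
  then have powers: "k^k = k * k * k^m" "k * k^(m+1) = k * k * k^m" by simp_all
  have "2 * (k choose 2) = k * (k - 1)" by (cases k) (simp_all add: choose_two)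
  then have "2 * ((k choose 2) * k^m) = k * (m+1) * k^m" using m(2) by (metis mult.assoc)
  moreover have "k * k * k^m \<le> 2 * (k * (m+1) * k^m)"
    using m(3) by (simp add: mult_right_mono)
  ultimately show ?thesis using binom powers by linarith
qed

lemma three_mult_power_pred_le:
  fixes k :: nat
  assumes "2 \<le> k"
  shows "3 * k^(k-1) \<le> 2 * (k+1)^(k-1)"
proof -
  obtain m where k: "k = m + 2" using assms by (metis add.commute le_add_diff_inverse)
  have binom: "k^(m+1) + (m+1) * k^m \<le> (k+1)^(m+1)"
    using binomial_three_terms_le[of k "m+1"] by simp
  have "k * k^m \<le> 2 * (m+1) * k^m" using k by (intro mult_right_mono) auto
  then show ?thesis using binom k by (simp add: algebra_simps)
qed

lemma power_ratio_le_last_ratio: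
  fixes c d e j n :: nat
  assumes "1 \<le> j" "j < n" "c * (n-1)^e \<le> d * n^e"
  shows "c * j^e \<le> d * (j+1)^e"
proof -
  have "j * n \<le> (j+1) * (n-1)" using assms(2) by (simp add: algebra_simps)
  then have "(j * n)^e \<le> ((j+1) * (n-1))^e" by (rule power_mono) simp
  then have "c * j^e * n^e \<le> (j+1)^e * (c * (n-1)^e)"
    by (metis mult_left_mono power_mult_distrib mult.assoc mult.left_commute zero_le)
  also have "\<dots> \<le> (j+1)^e * (d * n^e)" using assms(3) by simp
  finally have "(c * j^e) * n^e \<le> (d * (j+1)^e) * n^e" by (simp add: mult_ac)
  then show ?thesis using assms(2) by simp
qed

lemma sum_le_of_ratio_le:
  fixes f :: "nat \<Rightarrow> nat"
  assumes "p \<le> q" and "\<And>j. 1 \<le> j \<Longrightarrow> j < n \<Longrightarrow> q * f j \<le> p * f (j+1)"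
  shows "(q - p) * (\<Sum>j=1..n. f j) \<le> q * f n"
  using assms(2)
proof (induction n)
  case 0
  then show ?case by simp
next
  case (Suc n)
  show ?case
  proof (cases "n = 0")
    case True
    then show ?thesis by simp
  next
    case False
    have "(q - p) * (\<Sum>j=1..Suc n. f j) = (q - p) * (\<Sum>j=1..n. f j) + (q - p) * f (n+1)"
      by (simp add: algebra_simps)
    also have "\<dots> \<le> q * f n + (q - p) * f (n+1)" using Suc by simp
    also have "\<dots> \<le> p * f (n+1) + (q - p) * f (n+1)" using Suc.prems[of n] False by simp
    also have "\<dots> = q * f (Suc n)" using assms(1) by (simp add: diff_mult_distrib)
    finally show ?thesis .
  qed
qed

text \<open>The ratio estimates in the next proof are only good enough from \<open>n = 15\<close> on.\<close>
lemma sum_Suc_mult_power_le_small: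
  "\<forall>n\<in>set [3..<15]. (\<Sum>j=1..n. (j+1) * j^(n-2)) \<le> 2 * (n^(n-1) + n - 1::nat)"
  unfolding atLeastAtMost_upt sum_set_upt_conv_sum_list_nat
  by (simp add: upt_conv_Cons del: One_nat_def)

lemma sum_Suc_mult_power_le:
  fixes n :: nat
  assumes "3 \<le> n"
  shows "(\<Sum>j=1..n. (j+1) * j^(n-2)) \<le> 2 * (n^(n-1) + n - 1)"
proof (cases "n \<le> 14")
  case True
  then have "n \<in> set [3..<15]" using assms by (simp only: set_upt) simp
  with sum_Suc_mult_power_le_small show ?thesis ..
next
  case False
  have pred: "n - 1 = Suc (n - 2)" using assms by simp
  have "9 * (n-1)^(n-1) \<le> 4 * n^(n-1)"
    using nine_mult_power_self_le[of "n-1"] assms by simp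
  then have "5 * (\<Sum>j=1..n. j^(n-1)) \<le> 9 * n^(n-1)"
    using sum_le_of_ratio_le[where f="\<lambda>j. j^(n-1)" and q=9 and p=4] power_ratio_le_last_ratio by simp
  moreover have "3 * (n-1)^(n-2) \<le> 2 * n^(n-2)"
    using three_mult_power_pred_le[of "n-1"] assms by (simp add: numeral_2_eq_2)
  then have "(\<Sum>j=1..n. j^(n-2)) \<le> 3 * n^(n-2)"
    using sum_le_of_ratio_le[where f="\<lambda>j. j^(n-2)" and q=3 and p=2] power_ratio_le_last_ratio by simp
  moreover have "15 * n^(n-2) \<le> n^(n-1)" using False pred by simp
  moreover have "(\<Sum>j=1..n. (j+1) * j^(n-2)) = (\<Sum>j=1..n. j^(n-1)) + (\<Sum>j=1..n. j^(n-2))"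
    using pred by (simp add: sum.distrib[symmetric] add.commute)
  ultimately show ?thesis by linarith
qed

lemma card_extensional_funcset: "finite A \<Longrightarrow> card (A \<rightarrow>\<^sub>E B) = card B ^ card A"
  by (simp add: card_PiE)

lemma card_ordered_pairs_le:
  fixes U :: "'b::order set"
  assumes "finite U"
  shows "2 * card {(u, v). u \<in> U \<and> v \<in> U \<and> u \<le> v} \<le> card U * (card U + 1)"
proof -
  define C where "C = {(u, v). u \<in> U \<and> v \<in> U \<and> u \<le> v}"
  define D where "D = {(u, v). u \<in> U \<and> v \<in> U \<and> u < v}"
  have "C \<subseteq> U \<times> U" "D \<subseteq> U \<times> U" unfolding C_def D_def by auto
  then have fin: "finite C" "finite D" using assms by (meson finite_SigmaI finite_subset)+
  have "card C \<le> card ((\<lambda>u. (u, u)) ` U \<union> D)"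
    using fin assms unfolding C_def D_def by (intro card_mono) (auto simp: order.order_iff_strict)
  also have "\<dots> \<le> card U + card D"
    using card_Un_le[of "(\<lambda>u. (u, u)) ` U" D] card_image_le[OF assms, of "\<lambda>u. (u, u)"] by linarith
  finally have diag: "card C \<le> card U + card D" .
  have "card C + card D = card (C \<union> prod.swap ` D)"
    using fin by (subst card_Un_disjoint) (auto simp: card_image C_def D_def)
  also have "\<dots> \<le> card (U \<times> U)"
    using assms unfolding C_def D_def by (intro card_mono) auto
  finally have "card C + card D \<le> card U * card U" by (simp add: card_cartesian_product)
  with diag show ?thesis unfolding C_def[symmetric] by (simp add: algebra_simps)
qed

text \<open>Removing a maximal element: its up-set has one element, and every other up-set shrinks
  by at most one.\<close>
lemma sum_mono_card_up_set_le:
  fixes S :: "'b::order set" and h :: "nat \<Rightarrow> nat"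
  assumes "finite S" "mono h"
  shows "(\<Sum>p\<in>S. h (card {x\<in>S. p \<le> x})) \<le> (\<Sum>j=1..card S. h j)"
  using assms
proof (induction "card S" arbitrary: S h)
  case 0
  then show ?case by simp
next
  case (Suc k)
  then obtain m where mS: "m \<in> S" and max: "\<And>x. x \<in> S \<Longrightarrow> m \<le> x \<Longrightarrow> x = m"
    using finite_has_maximal[of S] by (metis card.empty nat.distinct(1))
  define S' where "S' = S - {m}"
  have S': "finite S'" "card S' = k" using Suc mS unfolding S'_def by auto
  have IH: "(\<Sum>p\<in>S'. h (Suc (card {x\<in>S'. p \<le> x}))) \<le> (\<Sum>j=1..k. h (Suc j))"
    using Suc.hyps(1)[of S' "h \<circ> Suc"] S' Suc.prems(2) by (simp add: mono_def)
  have shrink: "h (card {x\<in>S. p \<le> x}) \<le> h (Suc (card {x\<in>S'. p \<le> x}))" for p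
  proof -
    have "card {x\<in>S. p \<le> x} \<le> card (insert m {x\<in>S'. p \<le> x})"
      using S' unfolding S'_def by (intro card_mono) auto
    also have "\<dots> \<le> Suc (card {x\<in>S'. p \<le> x})" by (simp add: card_insert_if S')
    finally show ?thesis by (rule monoD[OF Suc.prems(2)])
  qed
  have "{x\<in>S. m \<le> x} = {m}" using mS max by auto
  then have "(\<Sum>p\<in>S. h (card {x\<in>S. p \<le> x})) = h 1 + (\<Sum>p\<in>S'. h (card {x\<in>S. p \<le> x}))"
    using Suc.prems(1) mS unfolding S'_def by (simp add: sum.remove)
  also have "\<dots> \<le> h 1 + (\<Sum>j=1..k. h (Suc j))"
    using order_trans[OF sum_mono[OF shrink] IH] by simp
  also have "\<dots> = (\<Sum>j=1..Suc k. h j)"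
    using sum.shift_bounds_cl_Suc_ivl[of h 1 k, symmetric] sum.atLeast_Suc_atMost[of 1 "Suc k" h]
    by simp
  finally show ?case using Suc.hyps(2) by simp
qed

definition mono_selfmaps :: "'b::order set \<Rightarrow> ('b \<Rightarrow> 'b) set" where
  "mono_selfmaps S = {t \<in> S \<rightarrow>\<^sub>E S. mono_on S t}"

lemma finite_mono_selfmaps: "finite S \<Longrightarrow> finite (mono_selfmaps S)"
  unfolding mono_selfmaps_def by (rule finite_subset[of _ "S \<rightarrow>\<^sub>E S"]) (auto intro: finite_PiE)

text \<open>A map moving the bottom to some \<open>p\<close> sends everything above \<open>p\<close>, hence everything,
  to \<open>p\<close>.\<close>
lemma card_mono_selfmaps_flat_le:
  fixes S :: "'b::order set"
  assumes fin: "finite S" and z: "z \<in> S" "\<And>x. x \<in> S \<Longrightarrow> z \<le> x"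
    and flat: "\<And>x y. x \<in> S - {z} \<Longrightarrow> y \<in> S - {z} \<Longrightarrow> x \<le> y \<Longrightarrow> x = y"
  shows "card (mono_selfmaps S) \<le> card S ^ (card S - 1) + (card S - 1)"
proof -
  define fixing_maps where "fixing_maps = (\<lambda>f. f(z := z)) ` ((S - {z}) \<rightarrow>\<^sub>E S)"
  define const_maps where "const_maps = (\<lambda>p. restrict (\<lambda>_. p) S) ` (S - {z})"
  have "mono_selfmaps S \<subseteq> fixing_maps \<union> const_maps"
  proof
    fix t assume "t \<in> mono_selfmaps S"
    then have t: "t \<in> S \<rightarrow>\<^sub>E S" "mono_on S t" unfolding mono_selfmaps_def by auto
    show "t \<in> fixing_maps \<union> const_maps"
    proof (cases "t z = z")
      case True
      then have "t = (restrict t (S - {z}))(z := z)"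
        using t(1) by (auto simp: fun_eq_iff PiE_def extensional_def)
      moreover have "restrict t (S - {z}) \<in> (S - {z}) \<rightarrow>\<^sub>E S" using t(1) by auto
      ultimately show ?thesis unfolding fixing_maps_def by blast
    next
      case False
      have const: "t x = t z" if "x \<in> S" for x
      proof -
        have "t z \<le> t x" using t(2) z that by (auto dest: mono_onD)
        moreover have "t z \<in> S - {z}" "t x \<in> S" using t(1) z False that by auto
        ultimately show ?thesis using flat z(2) by (metis Diff_iff order_antisym singletonD)
      qed
      then have "t = restrict (\<lambda>_. t z) S" using t(1) by (auto simp: fun_eq_iff PiE_def extensional_def)
      moreover have "t z \<in> S - {z}" using t(1) z False by auto
      ultimately show ?thesis unfolding const_maps_def by blast
    qed
  qed
  then have "card (mono_selfmaps S) \<le> card fixing_maps + card const_maps"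
    using fin unfolding fixing_maps_def const_maps_def
    by (meson card_Un_le card_mono finite_Diff finite_PiE finite_UnI finite_imageI order_trans)
  also have "card fixing_maps \<le> card S ^ (card S - 1)"
    using fin z card_image_le[of "(S - {z}) \<rightarrow>\<^sub>E S" "\<lambda>f. f(z := z)"] unfolding fixing_maps_def
    by (simp add: card_extensional_funcset finite_PiE)
  also have "card const_maps \<le> card S - 1"
    using fin z card_image_le[of "S - {z}"] unfolding const_maps_def by simp
  finally show ?thesis by simp
qed

lemma card_funcset_pinned_ordered_le:
  fixes U :: "'b::order set"
  assumes fin: "finite S" "finite U" and zab: "{z, a, b} \<subseteq> S" "card {z, a, b} = 3"
  shows "card {t \<in> S \<rightarrow>\<^sub>E U. t z = p \<and> t a \<le> t b}
    \<le> card {(u, v). u \<in> U \<and> v \<in> U \<and> u \<le> v} * card U ^ (card S - 3)"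
proof -
  define T where "T = {t \<in> S \<rightarrow>\<^sub>E U. t z = p \<and> t a \<le> t b}"
  define C where "C = {(u, v). u \<in> U \<and> v \<in> U \<and> u \<le> v}"
  define W where "W = S - {z, a, b}"
  define \<phi> where "\<phi> t = ((t a, t b), restrict t W)" for t :: "'a \<Rightarrow> 'b"
  have "\<phi> ` T \<subseteq> C \<times> (W \<rightarrow>\<^sub>E U)"
    using zab by (auto simp: \<phi>_def T_def C_def W_def restrict_PiE_iff PiE_mem split: if_splits)
  moreover have "inj_on \<phi> T"
  proof (rule inj_onI)
    fix t s assume ts: "t \<in> T" "s \<in> T" "\<phi> t = \<phi> s"
    show "t = s"
    proof (rule PiE_ext)
      show "t \<in> S \<rightarrow>\<^sub>E U" "s \<in> S \<rightarrow>\<^sub>E U" using ts unfolding T_def by auto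
      fix x assume "x \<in> S"
      then consider "x \<in> {z, a, b}" | "x \<in> W" unfolding W_def by blast
      then show "t x = s x"
      proof cases
        case 1
        then show ?thesis using ts unfolding T_def \<phi>_def by auto
      next
        case 2
        then show ?thesis using ts(3) unfolding \<phi>_def by (metis prod.inject restrict_apply')
      qed
    qed
  qed
  moreover have "finite C"
    using fin(2) by (intro finite_subset[of C "U \<times> U"]) (auto simp: C_def)
  ultimately have "card T \<le> card (C \<times> (W \<rightarrow>\<^sub>E U))"
    using fin by (intro card_inj_on_le) (auto simp: W_def finite_PiE)
  also have "\<dots> = card C * card U ^ (card S - 3)"
    using fin zab by (simp add: W_def card_cartesian_product card_extensional_funcset card_Diff_subset)
  finally show ?thesis unfolding T_def C_def .
qed

lemma card_mono_selfmaps_fiber_le: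
  fixes S :: "'b::order set"
  assumes fin: "finite S" and z: "\<And>x. x \<in> S \<Longrightarrow> z \<le> x"
    and zab: "{z, a, b} \<subseteq> S" "card {z, a, b} = 3" "a \<le> b"
  shows "card {t \<in> mono_selfmaps S. t z = p}
    \<le> card {(u, v). u \<in> {x\<in>S. p \<le> x} \<and> v \<in> {x\<in>S. p \<le> x} \<and> u \<le> v}
      * card {x\<in>S. p \<le> x} ^ (card S - 3)"
proof -
  define U where "U = {x\<in>S. p \<le> x}"
  have into_up_set: "t \<in> S \<rightarrow>\<^sub>E U \<and> t a \<le> t b" if "t \<in> mono_selfmaps S" "t z = p" for t
  proof -
    have t: "t \<in> S \<rightarrow>\<^sub>E S" "mono_on S t" using that(1) unfolding mono_selfmaps_def by auto
    have "t x \<in> U" if "x \<in> S" for x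
      using t z zab(1) \<open>t z = p\<close> \<open>x \<in> S\<close> unfolding U_def by (auto dest: mono_onD)
    then show ?thesis using t zab by (auto simp: PiE_iff dest: mono_onD)
  qed
  have "finite {t \<in> S \<rightarrow>\<^sub>E U. t z = p \<and> t a \<le> t b}"
    using fin unfolding U_def by (intro finite_subset[OF _ finite_PiE[of S]]) auto
  then have "card {t \<in> mono_selfmaps S. t z = p} \<le> card {t \<in> S \<rightarrow>\<^sub>E U. t z = p \<and> t a \<le> t b}"
    using into_up_set by (intro card_mono) auto
  also have "\<dots> \<le> card {(u, v). u \<in> U \<and> v \<in> U \<and> u \<le> v} * card U ^ (card S - 3)"
    using fin by (intro card_funcset_pinned_ordered_le zab(1,2)) (auto simp: U_def)
  finally show ?thesis unfolding U_def .
qed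

lemma card_mono_selfmaps_nonflat_le:
  fixes S :: "'b::order set"
  assumes fin: "finite S" and z: "z \<in> S" "\<And>x. x \<in> S \<Longrightarrow> z \<le> x"
    and ab: "a \<in> S - {z}" "b \<in> S - {z}" "a \<noteq> b" "a \<le> b"
  shows "card (mono_selfmaps S) \<le> card S ^ (card S - 1) + (card S - 1)"
proof -
  define n where "n = card S"
  define U where "U p = {x\<in>S. p \<le> x}" for p
  define C where "C p = {(u, v). u \<in> U p \<and> v \<in> U p \<and> u \<le> v}" for p
  define h where "h j = (j + 1) * j^(n-2)" for j :: nat
  have zab: "{z, a, b} \<subseteq> S" "card {z, a, b} = 3" using z ab by auto
  then have n: "3 \<le> n" unfolding n_def using fin by (metis card_mono)
  then have pred: "n - 2 = Suc (n - 3)" by simp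
  have mono_h: "mono h" unfolding h_def by (intro monoI mult_le_mono power_mono) auto
  have "mono_selfmaps S \<subseteq> (\<Union>p\<in>S. {t \<in> mono_selfmaps S. t z = p})"
    using z by (auto simp: mono_selfmaps_def)
  then have "card (mono_selfmaps S) \<le> card (\<Union>p\<in>S. {t \<in> mono_selfmaps S. t z = p})"
    by (rule card_mono[rotated]) (auto intro: finite_subset[OF _ finite_mono_selfmaps[OF fin]])
  also have "\<dots> \<le> (\<Sum>p\<in>S. card {t \<in> mono_selfmaps S. t z = p})"
    by (rule card_UN_le[OF fin])
  also have "\<dots> \<le> (\<Sum>p\<in>S. card (C p) * card (U p) ^ (n - 3))"
    unfolding C_def U_def n_def by (intro sum_mono card_mono_selfmaps_fiber_le[OF fin z(2) zab ab(4)])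
  finally have "2 * card (mono_selfmaps S) \<le> (\<Sum>p\<in>S. 2 * card (C p) * card (U p) ^ (n - 3))"
    by (simp add: sum_distrib_left[symmetric] mult.assoc)
  also have "\<dots> \<le> (\<Sum>p\<in>S. h (card (U p)))"
  proof (intro sum_mono)
    fix p
    have "2 * card (C p) * card (U p) ^ (n - 3) \<le> card (U p) * (card (U p) + 1) * card (U p) ^ (n - 3)"
      using card_ordered_pairs_le[of "U p"] fin unfolding C_def U_def by (simp add: mult_right_mono)
    also have "\<dots> = h (card (U p))"
      unfolding h_def pred by (simp add: algebra_simps)
    finally show "2 * card (C p) * card (U p) ^ (n - 3) \<le> h (card (U p))" .
  qed
  also have "\<dots> \<le> (\<Sum>j=1..n. h j)"
    using sum_mono_card_up_set_le[OF fin mono_h] unfolding U_def n_def .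
  also have "\<dots> \<le> 2 * (n ^ (n - 1) + n - 1)"
    unfolding h_def using n by (rule sum_Suc_mult_power_le)
  finally show ?thesis using n unfolding n_def by simp
qed

lemma card_mono_selfmaps_le:
  fixes S :: "'b::order set"
  assumes "finite S" "z \<in> S" "\<And>x. x \<in> S \<Longrightarrow> z \<le> x"
  shows "card (mono_selfmaps S) \<le> card S ^ (card S - 1) + (card S - 1)"
proof (cases "\<exists>a\<in>S - {z}. \<exists>b\<in>S - {z}. a \<noteq> b \<and> a \<le> b")
  case True
  then show ?thesis using card_mono_selfmaps_nonflat_le[OF assms] by blast
next
  case False
  then show ?thesis using card_mono_selfmaps_flat_le[OF assms] by blast
qed

lemma card_quotient_le_card_image:
  assumes "equiv A r" "finite (f ` A)"
    and "\<And>x y. x \<in> A \<Longrightarrow> y \<in> A \<Longrightarrow> f x = f y \<Longrightarrow> (x, y) \<in> r"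
  shows "card (A // r) \<le> card (f ` A)"
proof -
  define g where "g v = r `` {x \<in> A. f x = v}" for v
  have "r `` {x} = g (f x)" if "x \<in> A" for x
    using assms(1,3) that unfolding g_def equiv_def by (blast elim: transE symE)
  then have "A // r = g ` f ` A" unfolding quotient_def by auto
  then show ?thesis using assms(2) card_image_le by simp
qed

lemma lquot_append: "lquot (u @ v) L = lquot v (lquot u L)"
  unfolding lquot_def by simp

lemma lquot_in_quotients: "lquot w L \<in> quotients L"
  unfolding quotients_def by auto

lemma lquot_quotients_closed: "q \<in> quotients L \<Longrightarrow> lquot w q \<in> quotients L"
  unfolding quotients_def by (auto simp: lquot_append[symmetric])

lemma synt_semigroup_size_le_card_transformations:
  assumes "finite (quotients L)"
  shows "synt_semigroup_size L
    \<le> card ((\<lambda>x. restrict (\<lambda>q. lquot x q) (quotients L)) ` {x. x \<noteq> []})"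
  unfolding synt_semigroup_size_def
proof (rule card_quotient_le_card_image)
  show "equiv {x. x \<noteq> []} (synt_cong L)"
    unfolding equiv_def refl_on_def sym_def trans_def synt_cong_def by auto
  have "(\<lambda>x. restrict (\<lambda>q. lquot x q) (quotients L)) ` {x. x \<noteq> []}
      \<subseteq> quotients L \<rightarrow>\<^sub>E quotients L"
    using lquot_quotients_closed by auto
  then show "finite ((\<lambda>x. restrict (\<lambda>q. lquot x q) (quotients L)) ` {x. x \<noteq> []})"
    using assms by (meson finite_PiE finite_subset)
  fix x y :: "'a list"
  assume "x \<in> {x. x \<noteq> []}" "y \<in> {x. x \<noteq> []}"
    and eq: "restrict (\<lambda>q. lquot x q) (quotients L) = restrict (\<lambda>q. lquot y q) (quotients L)"
  have "lquot x (lquot u L) = lquot y (lquot u L)" for u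
    using fun_cong[OF eq, of "lquot u L"] by (simp add: lquot_in_quotients)
  then have "u @ x @ v \<in> L \<longleftrightarrow> u @ y @ v \<in> L" for u v
    unfolding lquot_def by (metis mem_Collect_eq)
  then show "(x, y) \<in> synt_cong L" using \<open>x \<in> _\<close> \<open>y \<in> _\<close> unfolding synt_cong_def by auto
qed

lemma left_ideal_subset_lquot: "left_ideal L \<Longrightarrow> L \<subseteq> lquot w L"
  unfolding left_ideal_def lquot_def by blast

lemma synt_semigroup_size_left_ideal_le:
  assumes "left_ideal L" "finite (quotients L)"
  shows "synt_semigroup_size L
    \<le> card (quotients L) ^ (card (quotients L) - 1) + (card (quotients L) - 1)"
proof -
  let ?Q = "quotients L"
  have "(\<lambda>x. restrict (\<lambda>q. lquot x q) ?Q) ` {x. x \<noteq> []} \<subseteq> mono_selfmaps ?Q"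
    unfolding mono_selfmaps_def by (auto intro!: mono_onI lquot_quotients_closed) (auto simp: lquot_def)
  then have "synt_semigroup_size L \<le> card (mono_selfmaps ?Q)"
    using synt_semigroup_size_le_card_transformations[OF assms(2)]
      card_mono[OF finite_mono_selfmaps[OF assms(2)]] by (meson order_trans)
  also have "\<dots> \<le> card ?Q ^ (card ?Q - 1) + (card ?Q - 1)"
  proof (rule card_mono_selfmaps_le[OF assms(2)])
    show "L \<in> ?Q" using lquot_in_quotients[of "[]" L] by (simp add: lquot_def)
    show "L \<subseteq> q" if "q \<in> ?Q" for q
      using that left_ideal_subset_lquot[OF assms(1)] unfolding quotients_def by auto
  qed
  finally show ?thesis .
qed

lemma lquot_Compl: "lquot w (- L) = - lquot w L"
  unfolding lquot_def by auto

lemma quotients_Compl: "quotients (- L) = uminus ` quotients L"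
  unfolding quotients_def by (auto simp: lquot_Compl)

lemma synt_cong_Compl: "synt_cong (- L) = synt_cong L"
  unfolding synt_cong_def by auto

lemma left_ideal_Compl_suffix_closed:
  assumes "suffix_closed L" "L \<noteq> UNIV"
  shows "left_ideal (- L)"
  using assms unfolding left_ideal_def suffix_closed_def by auto

theorem lemma5:
  fixes L :: "('a::finite) list set" and n :: nat
  assumes "n \<ge> 3"
    and "left_ideal L \<or> suffix_closed L"
    and "finite (quotients L)" and "card (quotients L) = n"
  shows "synt_semigroup_size L \<le> n ^ (n - 1) + n - 1"
  using assms(2)
proof
  assume "left_ideal L"
  then show ?thesis using synt_semigroup_size_left_ideal_le[of L] assms by simp
next
  assume "suffix_closed L"
  moreover have "L \<noteq> UNIV"
  proof
    assume "L = UNIV"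
    then have "quotients L = {UNIV}" unfolding quotients_def lquot_def by auto
    then show False using assms by simp
  qed
  ultimately have "left_ideal (- L)" by (rule left_ideal_Compl_suffix_closed)
  moreover have "quotients (- L) = uminus ` quotients L" by (rule quotients_Compl)
  then have "finite (quotients (- L))" "card (quotients (- L)) = n"
    using assms by (simp_all add: card_image inj_on_def)
  ultimately have "synt_semigroup_size (- L) \<le> n ^ (n - 1) + (n - 1)"
    using synt_semigroup_size_left_ideal_le by metis
  then show ?thesis
    using assms unfolding synt_semigroup_size_def synt_cong_Compl by simp
qed

end
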